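(* Let $F$ be a distribution function on $[0,1]$ and $X,X_1,X_2,\dots$ i.i.d. with distribution function $F$. Define $(Z_0,r_0)=(0,1)$ and, recursively, $K_n=[Z_n-r_n,Z_n+r_n]$, $p_{n+1}=2r_nX_{n+1}+Z_n-r_n$, $K_{n+1}=K_n\cap[p_{n+1}-1,p_{n+1}+1]$, with $Z_{n+1},r_{n+1}$ the center and half-length of $K_{n+1}$. Assume that for some $\delta>0$, \[ \mathbb P\{2\min\{X,1-X\}\le x\}=x^\delta,\quad x\in[0,1]. \] Then for every $x>0$, \[ \mathbb P\Big\{4n^{1/\delta}\Big(r_n-\tfrac12\Big)>x\Big\}\to e^{-x^\delta}\quad(n\to\infty), \] i.e. $4n^{1/\delta}(r_n-1/2)\xrightarrow{\mathcal D}\mathrm{Weibull}(\delta)$, and for every $\alpha>0$, \[ \lim_{n\to\infty}\mathbb E\Big[4^\alpha n^{\alpha/\delta}\Big(r_n-\tfrac12\Big)^\alpha\Big]=\frac{\alpha}{\delta}\,\Gamma\Big(\frac{\alpha}{\delta}\Big). \]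
   Context: $X_{n+1}$ is independent of $(Z_k,r_k)_{k\le n}$. The Weibull$(\delta)$ distribution has distribution function $1-e^{-x^\delta}$ for $x>0$. $\Gamma$ is the Gamma function. *)

theory Defs
  imports "HOL-Probability.Probability"
begin

text \<open>Given a sample path x, where x n stands for X_(n+1), ZR x n = (Z_n, r_n).\<close>
fun ZR :: "(nat \<Rightarrow> real) \<Rightarrow> nat \<Rightarrow> real \<times> real" where
  "ZR x 0 = (0, 1)"
| "ZR x (Suc n) =
     (let z = fst (ZR x n); r = snd (ZR x n);
          p = 2 * r * x n + z - r;
          a = max (z - r) (p - 1); b = min (z + r) (p + 1)
      in ((a + b) / 2, (b - a) / 2))"

end

theory Submission
  imports Defs "HOL-Probability.Probability"
begin

(* Write v(t) = 2 min(t, 1 - t) for the folded position of t in [0,1], so that by hypothesis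
   P{v(X) <= c} = c^delta.  A direct computation of one step of the recursion gives
     r_(n+1) - 1/2 = min (r_n - 1/2, r_n * v(X_(n+1)) / 2),
   hence r_n decreases from 1 and stays >= 1/2.  Consequently 4(r_n - 1/2) exceeds c as soon as
   all of v(X_1), ..., v(X_n) exceed c, and conversely it is at most 2 r_j v(X_k) for j <= k < n.
   By independence these events have probability (1 - c^delta)^m, which with c = x / n^(1/delta)
   yields matching lower and upper bounds (the upper one after splitting off a fixed number k0
   of initial steps) converging to exp(-x^delta): this is the distributional limit.
   The moments follow from the layer-cake formula E[T^alpha] = int alpha y^(alpha-1) P{T > y} dy,
   dominated convergence (the bound P{T_n > y} <= exp(-(y/2)^delta) holds uniformly in n) and the
   Weibull moment int alpha y^(alpha-1) exp(-y^delta) dy = Gamma(alpha/delta + 1). *)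

declare ZR.simps(2)[simp del]

section \<open>The deterministic recursion for the half-length\<close>

definition edge_dist :: "real \<Rightarrow> real" where
  "edge_dist t = 2 * min t (1 - t)"

lemma edge_dist_measurable[measurable]: "edge_dist \<in> borel_measurable borel"
  unfolding edge_dist_def by measurable

lemma edge_dist_bounds: "t \<in> {0..1} \<Longrightarrow> 0 \<le> edge_dist t \<and> edge_dist t \<le> 1"
  by (auto simp: edge_dist_def min_def)

text \<open>One step of the recursion: the new half-length is the old one, unless the new point
  p lies so far inside K_n that the window [p - 1, p + 1] cuts it off.\<close>
lemma half_length_step:
  assumes r: "0 \<le> snd (ZR x n)" "snd (ZR x n) \<le> 1" and xn: "x n \<in> {0..1}"
  shows "snd (ZR x (Suc n)) = min (snd (ZR x n)) (1/2 + snd (ZR x n) * edge_dist (x n) / 2)"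
proof -
  define r z q where "r = snd (ZR x n)" and "z = fst (ZR x n)" and "q = r * x n"
  have q: "0 \<le> q" "q \<le> r"
    using r xn unfolding q_def r_def by (auto intro: mult_left_le)
  have "r * edge_dist (x n) / 2 = r * min (x n) (1 - x n)"
    by (simp add: edge_dist_def)
  also have "\<dots> = min q (r - q)"
    using r unfolding q_def r_def by (simp add: min_mult_distrib_left right_diff_distrib)
  finally have dist: "r * edge_dist (x n) / 2 = min q (r - q)" .
  have "snd (ZR x (Suc n)) = (min (z + r) (2*q + z - r + 1) - max (z - r) (2*q + z - r - 1)) / 2"
    by (simp add: ZR.simps(2) Let_def r_def z_def q_def mult.assoc)
  also have "\<dots> = min r (1/2 + min q (r - q))"
    using q r unfolding r_def by (simp add: min_def max_def)
  finally show ?thesis using dist r_def by simp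
qed

lemma half_length_path:
  assumes x: "\<forall>k. x k \<in> {0..1}"
  shows "1/2 \<le> snd (ZR x n) \<and> snd (ZR x n) \<le> 1 \<and>
         snd (ZR x (Suc n)) = min (snd (ZR x n)) (1/2 + snd (ZR x n) * edge_dist (x n) / 2)"
proof (induction n)
  case 0
  then show ?case using x by (intro conjI half_length_step) auto
next
  case (Suc n)
  have v: "0 \<le> edge_dist (x n)" "edge_dist (x n) \<le> 1" using edge_dist_bounds x by auto
  have "1/2 \<le> snd (ZR x (Suc n)) \<and> snd (ZR x (Suc n)) \<le> 1"
    using Suc v by (auto simp: min_def)
  with x show ?case by (auto intro: half_length_step)
qed

lemma half_length_antimono:
  assumes x: "\<forall>k. x k \<in> {0..1}" and "j \<le> n"
  shows "snd (ZR x n) \<le> snd (ZR x j)"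
  using assms(2)
proof (induction n rule: dec_induct)
  case (step m)
  then show ?case using half_length_path[OF x, of m] by linarith
qed simp

lemma excess_lower:
  assumes x: "\<forall>k. x k \<in> {0..1}" and c: "c < 2" and v: "\<forall>k<n. c < edge_dist (x k)"
  shows "c < 4 * (snd (ZR x n) - 1/2)"
  using v
proof (induction n)
  case 0 then show ?case using c by simp
next
  case (Suc n)
  have IH: "c < 4 * (snd (ZR x n) - 1/2)" and cv: "c < edge_dist (x n)" using Suc by auto
  have r: "1/2 \<le> snd (ZR x n)"
    and step: "snd (ZR x (Suc n)) = min (snd (ZR x n)) (1/2 + snd (ZR x n) * edge_dist (x n) / 2)"
    using half_length_path[OF x, of n] by auto
  have "1/2 * edge_dist (x n) \<le> snd (ZR x n) * edge_dist (x n)"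
    using r edge_dist_bounds x by (intro mult_right_mono) auto
  then show ?case using IH cv step by (simp add: min_def ac_simps)
qed

lemma excess_upper:
  assumes x: "\<forall>k. x k \<in> {0..1}" and "j \<le> k" "k < n"
  shows "4 * (snd (ZR x n) - 1/2) \<le> 2 * snd (ZR x j) * edge_dist (x k)"
proof -
  have "snd (ZR x n) \<le> snd (ZR x (Suc k))"
    using assms by (intro half_length_antimono) auto
  also have "\<dots> \<le> 1/2 + snd (ZR x k) * edge_dist (x k) / 2"
    using half_length_path[OF x, of k] by simp
  also have "snd (ZR x k) * edge_dist (x k) \<le> snd (ZR x j) * edge_dist (x k)"
    using half_length_antimono[OF x \<open>j \<le> k\<close>] edge_dist_bounds x by (intro mult_right_mono) auto
  finally show ?thesis by simp
qed

lemma excess_upper0: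
  assumes x: "\<forall>k. x k \<in> {0..1}" and "k < n"
  shows "4 * (snd (ZR x n) - 1/2) \<le> 2 * edge_dist (x k)"
  using excess_upper[OF x _ assms(2), of 0] by simp

lemma excess_dichotomy:
  assumes x: "\<forall>k. x k \<in> {0..1}" and "k0 \<le> n" "0 < \<epsilon>"
    and big: "c * (1 + 2 * \<epsilon>) < 4 * (snd (ZR x n) - 1/2)"
  shows "(\<forall>k<k0. 2 * \<epsilon> < edge_dist (x k)) \<or> (\<forall>k\<in>{k0..<n}. c < edge_dist (x k))"
proof (cases "snd (ZR x k0) - 1/2 > \<epsilon>")
  case True
  have "2 * \<epsilon> < edge_dist (x k)" if "k < k0" for k
    using excess_upper0[OF x that] True by simp
  then show ?thesis by blast
next
  case False
  have "c < edge_dist (x k)" if k: "k \<in> {k0..<n}" for k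
  proof -
    have "c * (1 + 2 * \<epsilon>) < 2 * snd (ZR x k0) * edge_dist (x k)"
      using big excess_upper[OF x, of k0 k n] k by auto
    also have "\<dots> \<le> (1 + 2 * \<epsilon>) * edge_dist (x k)"
      using False edge_dist_bounds[of "x k"] x by (intro mult_right_mono) auto
    finally show ?thesis using \<open>0 < \<epsilon>\<close> by (simp add: mult.commute)
  qed
  then show ?thesis by blast
qed

lemma one_minus_pow_le_exp:
  fixes a :: real and n :: nat
  assumes "0 \<le> a" "a \<le> n" "n \<ge> 1"
  shows "(1 - a / n) ^ n \<le> exp (- a)"
proof -
  have "(1 - a / n) ^ n \<le> exp (- a / n) ^ n"
  proof (intro power_mono)
    show "1 - a / n \<le> exp (- a / n)" using exp_ge_add_one_self[of "- a / n"] by simp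
    show "0 \<le> 1 - a / n" using assms by (simp add: field_simps)
  qed
  also have "\<dots> = exp (- a)"
    using assms by (simp add: exp_of_nat_mult[symmetric])
  finally show ?thesis .
qed

lemma one_minus_pow_shift_limit:
  fixes B :: real
  shows "(\<lambda>n. (1 - B / real n) ^ (n - k)) \<longlonglongrightarrow> exp (- B)"
proof -
  have full: "(\<lambda>n. (1 - B / real n) ^ n) \<longlonglongrightarrow> exp (- B)"
    using tendsto_exp_limit_sequentially[of "- B"] by simp
  have "(\<lambda>n. B / real n) \<longlonglongrightarrow> 0"
    by (intro tendsto_divide_0[OF tendsto_const] filterlim_at_top_imp_at_infinity filterlim_real_sequentially)
  then have "(\<lambda>n. (1 - B / real n) ^ k) \<longlonglongrightarrow> (1 - 0) ^ k"
    by (intro tendsto_intros)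
  then have "(\<lambda>n. (1 - B / real n) ^ n / (1 - B / real n) ^ k) \<longlonglongrightarrow> exp (- B) / 1"
    using full by (intro tendsto_divide) simp_all
  moreover have "eventually (\<lambda>n. (1 - B / real n) ^ n / (1 - B / real n) ^ k
      = (1 - B / real n) ^ (n - k)) sequentially"
    using eventually_ge_at_top[of "max k (nat \<lceil>B\<rceil> + 1)"]
  proof eventually_elim
    case (elim n)
    then have "B < real n" by linarith
    then have "(1 - B / real n) ^ k \<noteq> 0" using elim by (simp add: field_simps)
    moreover have "(1 - B / real n) ^ n = (1 - B / real n) ^ (n - k) * (1 - B / real n) ^ k"
      using elim by (simp add: power_add[symmetric])
    ultimately show ?case by (metis nonzero_mult_div_cancel_right)
  qed
  ultimately show ?thesis by (simp add: tendsto_cong)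
qed

lemma scaled_level_powr:
  fixes \<delta> y :: real
  assumes "\<delta> > 0" "n \<ge> 1" "0 \<le> y"
  shows "(y / real n powr (1 / \<delta>)) powr \<delta> = y powr \<delta> / n"
proof -
  have "(real n powr (1 / \<delta>)) powr \<delta> = real n"
    using assms by (simp add: powr_powr)
  then show ?thesis using assms by (simp add: powr_divide)
qed

text \<open>Levels with c^\<delta> \<le> 1 lie in [0,1], where the law of v(X) is known.\<close>
lemma le_one_of_powr_le_one:
  fixes c \<delta> :: real
  assumes "\<delta> > 0" "0 \<le> c" "c powr \<delta> \<le> 1"
  shows "c \<le> 1"
proof (rule ccontr)
  assume "\<not> c \<le> 1"
  then have "1 powr \<delta> < c powr \<delta>" using assms by (intro powr_less_mono2) auto
  then show False using assms by simp
qed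

definition power_weight :: "real \<Rightarrow> real \<Rightarrow> real" where
  "power_weight \<alpha> y = (if 0 < y then \<alpha> * y powr (\<alpha> - 1) else 0)"

lemma power_weight_nonneg: "\<alpha> > 0 \<Longrightarrow> 0 \<le> power_weight \<alpha> y"
  by (simp add: power_weight_def)

lemma power_weight_measurable[measurable]: "power_weight \<alpha> \<in> borel_measurable borel"
  unfolding power_weight_def by measurable

lemma power_weight_integral_below:
  fixes a \<alpha> :: real
  assumes "\<alpha> > 0" "a \<ge> 0"
  shows "(\<integral>\<^sup>+ y. ennreal (power_weight \<alpha> y) * indicator {y. y < a} y \<partial>lborel) = ennreal (a powr \<alpha>)"
proof -
  have "((\<lambda>y. \<alpha> * y powr (\<alpha> - 1)) has_integral (a powr \<alpha> - 0 powr \<alpha>)) {0..a}"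
  proof (rule fundamental_theorem_of_calculus_interior)
    show "continuous_on {0..a} (\<lambda>y. y powr \<alpha>)"
      using assms by (intro continuous_on_powr') (auto intro: continuous_intros)
    fix x assume "x \<in> {0<..<a}"
    then show "((\<lambda>y. y powr \<alpha>) has_vector_derivative \<alpha> * x powr (\<alpha> - 1)) (at x)"
      by (auto intro!: has_real_derivative_powr
               simp: has_real_derivative_iff_has_vector_derivative[symmetric])
  qed (use assms in auto)
  then have I: "((\<lambda>y. \<alpha> * y powr (\<alpha> - 1)) has_integral a powr \<alpha>) {0<..<a}"
    by (simp add: has_integral_Icc_iff_Ioo)
  have "(\<integral>\<^sup>+ y. ennreal (power_weight \<alpha> y) * indicator {y. y < a} y \<partial>lborel)
      = (\<integral>\<^sup>+ y. ennreal (indicator {0<..<a} y * (\<alpha> * y powr (\<alpha> - 1))) \<partial>lborel)"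
    by (intro nn_integral_cong) (auto simp: power_weight_def indicator_def)
  also have "\<dots> = ennreal (a powr \<alpha>)"
    by (rule nn_integral_has_integral_lebesgue[OF _ I]) (use assms in auto)
  finally show ?thesis .
qed

lemma layer_cake:
  fixes N :: "'b measure" and h :: "'b \<Rightarrow> real"
  assumes N: "sigma_finite_measure N" and \<alpha>: "\<alpha> > 0"
    and h[measurable]: "h \<in> borel_measurable N" and hpos: "AE t in N. 0 \<le> h t"
  shows "(\<integral>\<^sup>+ t. ennreal (h t powr \<alpha>) \<partial>N)
       = (\<integral>\<^sup>+ y. ennreal (power_weight \<alpha> y) * emeasure N {t \<in> space N. y < h t} \<partial>lborel)"
proof -
  interpret N: sigma_finite_measure N by fact
  interpret P: pair_sigma_finite N lborel
    by (intro pair_sigma_finite.intro N) (rule lborel.sigma_finite_measure_axioms)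
  have "(\<integral>\<^sup>+ t. ennreal (h t powr \<alpha>) \<partial>N)
      = (\<integral>\<^sup>+ t. (\<integral>\<^sup>+ y. ennreal (power_weight \<alpha> y) * indicator {y. y < h t} y \<partial>lborel) \<partial>N)"
    using hpos by (intro nn_integral_cong_AE) (auto simp: power_weight_integral_below[OF \<alpha>])
  also have "\<dots> = (\<integral>\<^sup>+ y. (\<integral>\<^sup>+ t. ennreal (power_weight \<alpha> y) * indicator {y. y < h t} y \<partial>N) \<partial>lborel)"
  proof (rule P.Fubini'[symmetric])
    have "(\<lambda>(t, y). ennreal (power_weight \<alpha> y) * (if y < h t then 1 else 0))
        \<in> borel_measurable (N \<Otimes>\<^sub>M lborel)"
      by measurable
    then show "(\<lambda>(t, y). ennreal (power_weight \<alpha> y) * indicator {y. y < h t} y)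
        \<in> borel_measurable (N \<Otimes>\<^sub>M lborel)"
      by (simp add: indicator_def)
  qed
  also have "\<dots> = (\<integral>\<^sup>+ y. ennreal (power_weight \<alpha> y) * emeasure N {t \<in> space N. y < h t} \<partial>lborel)"
  proof (intro nn_integral_cong)
    fix y
    have "(\<integral>\<^sup>+ t. ennreal (power_weight \<alpha> y) * indicator {y. y < h t} y \<partial>N)
        = (\<integral>\<^sup>+ t. ennreal (power_weight \<alpha> y) * indicator {t \<in> space N. y < h t} t \<partial>N)"
      by (intro nn_integral_cong) (auto simp: indicator_def)
    also have "\<dots> = ennreal (power_weight \<alpha> y) * emeasure N {t \<in> space N. y < h t}"
      by (rule nn_integral_cmult_indicator) measurable
    finally show "(\<integral>\<^sup>+ t. ennreal (power_weight \<alpha> y) * indicator {y. y < h t} y \<partial>N)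
        = ennreal (power_weight \<alpha> y) * emeasure N {t \<in> space N. y < h t}" .
  qed
  finally show ?thesis .
qed

text \<open>If E is standard exponential, then c E^(1/\<delta>) is Weibull with scale c: its tail is
  exp(-(y/c)^\<delta>) and its \<alpha>-th moment is c^\<alpha> \<Gamma>(\<alpha>/\<delta> + 1).\<close>
lemma exponential_power_tail:
  fixes c \<delta> y :: real
  assumes c: "c > 0" and \<delta>: "\<delta> > 0" and y: "y > 0"
  shows "emeasure (density lborel (exponential_density 1)) {t. y < c * max 0 t powr (1 / \<delta>)}
       = ennreal (exp (- ((y / c) powr \<delta>)))"
proof -
  let ?E = "density lborel (exponential_density 1)"
  interpret E: prob_space ?E by (rule prob_space_exponential_density) simp
  have "{t. y < c * max 0 t powr (1 / \<delta>)} = {t. (y / c) powr \<delta> < t}"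
  proof (intro set_eqI iffI; simp)
    fix t assume "y < c * max 0 t powr (1 / \<delta>)"
    then have "y / c < max 0 t powr (1 / \<delta>)" using c by (simp add: field_simps)
    then have "(y / c) powr \<delta> < (max 0 t powr (1 / \<delta>)) powr \<delta>"
      using y c \<delta> by (intro powr_less_mono2) auto
    also have "\<dots> = max 0 t" using \<delta> by (simp add: powr_powr)
    finally show "(y / c) powr \<delta> < t" using y c by (auto simp: max_def split: if_splits)
  next
    fix t assume t: "(y / c) powr \<delta> < t"
    have t0: "0 < t" using t y c by (smt (verit) powr_ge_zero)
    have "y / c = ((y / c) powr \<delta>) powr (1 / \<delta>)" using \<delta> y c by (simp add: powr_powr)
    also have "\<dots> < t powr (1 / \<delta>)" using t \<delta> by (intro powr_less_mono2) auto
    finally show "y < c * max 0 t powr (1 / \<delta>)" using t0 c by (simp add: field_simps)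
  qed
  moreover have "measure ?E {t. b < t} = exp (- b)" if "b \<ge> 0" for b :: real
  proof -
    have "measure ?E {t. b < t} = measure ?E (space ?E - {..b})"
      by (intro arg_cong[where f="measure ?E"]) auto
    also have "\<dots> = 1 - measure ?E {..b}"
      by (rule E.prob_compl) simp
    also have "measure ?E {..b} = 1 - exp (- b)"
      using emeasure_erlang_density[of 1 0 b] that by (simp add: E.emeasure_eq_measure erlang_CDF_0)
    finally show ?thesis by simp
  qed
  ultimately show ?thesis by (simp add: E.emeasure_eq_measure)
qed

lemma exponential_power_moment:
  fixes c \<alpha> \<delta> :: real
  assumes c: "c > 0" and \<alpha>: "\<alpha> > 0" and \<delta>: "\<delta> > 0"
  shows "(\<integral>\<^sup>+ t. ennreal ((c * max 0 t powr (1 / \<delta>)) powr \<alpha>) \<partial>density lborel (exponential_density 1))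
       = ennreal (c powr \<alpha> * Gamma (\<alpha> / \<delta> + 1))"
proof -
  have "(\<integral>\<^sup>+ t. ennreal ((c * max 0 t powr (1 / \<delta>)) powr \<alpha>) \<partial>density lborel (exponential_density 1))
      = (\<integral>\<^sup>+ t. ennreal (exponential_density 1 t) * ennreal ((c * max 0 t powr (1 / \<delta>)) powr \<alpha>) \<partial>lborel)"
    by (simp add: nn_integral_density)
  also have "\<dots> = (\<integral>\<^sup>+ t. ennreal (indicator {0..} t * (c powr \<alpha> * (t powr (\<alpha> / \<delta> + 1 - 1) / exp t))) \<partial>lborel)"
  proof (intro nn_integral_cong)
    fix t :: real
    show "ennreal (exponential_density 1 t) * ennreal ((c * max 0 t powr (1 / \<delta>)) powr \<alpha>)
        = ennreal (indicator {0..} t * (c powr \<alpha> * (t powr (\<alpha> / \<delta> + 1 - 1) / exp t)))"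
    proof (cases "t \<ge> 0")
      case True
      have "(c * max 0 t powr (1 / \<delta>)) powr \<alpha> = c powr \<alpha> * t powr (\<alpha> / \<delta>)"
        using True c by (simp add: powr_mult powr_powr)
      then show ?thesis using True
        by (simp add: exponential_density_def ennreal_mult[symmetric] exp_minus field_simps)
    qed (simp add: exponential_density_def)
  qed
  also have "\<dots> = ennreal (c powr \<alpha> * Gamma (\<alpha> / \<delta> + 1))"
  proof (rule nn_integral_has_integral_lebesgue)
    have "((\<lambda>t. t powr (\<alpha> / \<delta> + 1 - 1) / exp t) has_integral Gamma (\<alpha> / \<delta> + 1)) {0..}"
      using \<alpha> \<delta> by (intro Gamma_integral_real) (simp add: add_pos_pos)
    then show "((\<lambda>t. c powr \<alpha> * (t powr (\<alpha> / \<delta> + 1 - 1) / exp t))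
        has_integral c powr \<alpha> * Gamma (\<alpha> / \<delta> + 1)) {0..}"
      by (rule has_integral_mult_right)
  qed simp
  finally show ?thesis .
qed

text \<open>Weibull moments: \<integral> \<alpha> y^(\<alpha>-1) exp(-(y/c)^\<delta>) dy = c^\<alpha> \<Gamma>(\<alpha>/\<delta> + 1), by the layer cake
  applied to c E^(1/\<delta>).\<close>
lemma weibull_moment_integral:
  fixes c \<alpha> \<delta> :: real
  assumes c: "c > 0" and \<alpha>: "\<alpha> > 0" and \<delta>: "\<delta> > 0"
  shows "has_bochner_integral lborel (\<lambda>y. power_weight \<alpha> y * exp (- ((y / c) powr \<delta>)))
           (c powr \<alpha> * Gamma (\<alpha> / \<delta> + 1))"
proof -
  let ?E = "density lborel (exponential_density 1)"
  interpret E: prob_space ?E by (rule prob_space_exponential_density) simp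
  let ?h = "\<lambda>t. c * max 0 t powr (1 / \<delta>)"
  have "(\<integral>\<^sup>+ t. ennreal (?h t powr \<alpha>) \<partial>?E)
      = (\<integral>\<^sup>+ y. ennreal (power_weight \<alpha> y) * emeasure ?E {t \<in> space ?E. y < ?h t} \<partial>lborel)"
    using c by (intro layer_cake[OF E.sigma_finite_measure_axioms \<alpha>]) auto
  also have "\<dots> = (\<integral>\<^sup>+ y. ennreal (power_weight \<alpha> y * exp (- ((y / c) powr \<delta>))) \<partial>lborel)"
  proof (intro nn_integral_cong)
    fix y :: real
    show "ennreal (power_weight \<alpha> y) * emeasure ?E {t \<in> space ?E. y < ?h t}
        = ennreal (power_weight \<alpha> y * exp (- ((y / c) powr \<delta>)))"
      using exponential_power_tail[OF c \<delta>, of y] \<alpha>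
      by (cases "y > 0") (simp_all add: power_weight_def ennreal_mult)
  qed
  finally have "(\<integral>\<^sup>+ y. ennreal (power_weight \<alpha> y * exp (- ((y / c) powr \<delta>))) \<partial>lborel)
      = ennreal (c powr \<alpha> * Gamma (\<alpha> / \<delta> + 1))"
    using exponential_power_moment[OF c \<alpha> \<delta>] by simp
  moreover have "0 < Gamma (\<alpha> / \<delta> + 1)"
    using \<alpha> \<delta> by (intro Gamma_real_pos) (simp add: add_pos_pos)
  ultimately show ?thesis
    using \<alpha> c by (intro has_bochner_integral_nn_integral) (auto simp: power_weight_nonneg)
qed

text \<open>Choice of the parameters for the upper bound on the tail probability: a small \<epsilon> and a
  number k0 of initial steps such that the limiting value of that bound stays below a.\<close>
lemma upper_bound_parameters:
  fixes x \<delta> a :: real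
  assumes x: "x > 0" and \<delta>: "\<delta> > 0" and a: "exp (- (x powr \<delta>)) < a"
  obtains \<epsilon> :: real and k0 :: nat where "0 < \<epsilon>" "2 * \<epsilon> \<le> 1"
    "(1 - (2 * \<epsilon>) powr \<delta>) ^ k0 + exp (- ((x / (1 + 2 * \<epsilon>)) powr \<delta>)) < a"
proof -
  define e where "e = a - exp (- (x powr \<delta>))"
  have e: "e > 0" using a by (simp add: e_def)
  have "((\<lambda>\<epsilon>. exp (- ((x / (1 + 2 * \<epsilon>)) powr \<delta>))) \<longlongrightarrow> exp (- ((x / (1 + 2 * 0)) powr \<delta>)))
      (at_right 0)"
    using x by (intro tendsto_intros) auto
  then have "eventually (\<lambda>\<epsilon>. exp (- ((x / (1 + 2 * \<epsilon>)) powr \<delta>)) < exp (- (x powr \<delta>)) + e / 2)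
      (at_right 0)"
    using e by (intro order_tendstoD(2)) auto
  moreover have "eventually (\<lambda>\<epsilon>. \<epsilon> \<in> {0<..<1/2}) (at_right (0::real))"
    by (rule eventually_at_right_real) simp
  ultimately have ev: "eventually (\<lambda>\<epsilon>. exp (- ((x / (1 + 2 * \<epsilon>)) powr \<delta>)) < exp (- (x powr \<delta>)) + e / 2
      \<and> \<epsilon> \<in> {0<..<1/2}) (at_right 0)"
    by (rule eventually_conj)
  then obtain \<epsilon> where \<epsilon>: "exp (- ((x / (1 + 2 * \<epsilon>)) powr \<delta>)) < exp (- (x powr \<delta>)) + e / 2"
    "\<epsilon> \<in> {0<..<1/2}"
    using eventually_happens[OF ev] by (auto simp: trivial_limit_at_right_real)
  define \<rho> where "\<rho> = 1 - (2 * \<epsilon>) powr \<delta>"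
  have "(2 * \<epsilon>) powr \<delta> \<le> 1 powr \<delta>" using \<epsilon> \<delta> by (intro powr_mono2) auto
  moreover have "0 < (2 * \<epsilon>) powr \<delta>" using \<epsilon> by simp
  ultimately have "0 \<le> \<rho>" "\<rho> < 1" by (auto simp: \<rho>_def)
  then have "(\<lambda>k. \<rho> ^ k) \<longlonglongrightarrow> 0" by (intro LIMSEQ_power_zero) auto
  then obtain k0 where "\<rho> ^ k0 < e / 2"
    using e order_tendstoD(2)[of _ 0 sequentially "e / 2"] by (auto simp: eventually_sequentially)
  then have "(1 - (2 * \<epsilon>) powr \<delta>) ^ k0 + exp (- ((x / (1 + 2 * \<epsilon>)) powr \<delta>)) < a"
    using \<epsilon>(1) unfolding \<rho>_def e_def by argo
  with \<epsilon>(2) show ?thesis by (intro that[of \<epsilon> k0]) auto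
qed

text \<open>The hypotheses of the theorem: X_1, X_2, ... i.i.d. copies of X on [0,1] with
  P{v(X) \<le> c} = c^\<delta>.  Here Xs k stands for X_(k+1).\<close>
locale shrinking_interval = prob_space M for M :: "'a measure" +
  fixes X :: "'a \<Rightarrow> real" and Xs :: "nat \<Rightarrow> 'a \<Rightarrow> real" and \<delta> :: real
  assumes X_meas[measurable]: "X \<in> borel_measurable M"
    and indep: "indep_vars (\<lambda>_. borel) Xs UNIV"
    and distr_eq: "\<And>i. distr M borel (Xs i) = distr M borel X"
    and X_unit: "AE \<omega> in M. X \<omega> \<in> {0..1}"
    and \<delta>_pos: "\<delta> > 0"
    and cdf: "\<And>x. x \<in> {0..1} \<Longrightarrow> measure M {\<omega> \<in> space M. 2 * min (X \<omega>) (1 - X \<omega>) \<le> x} = x powr \<delta>"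
begin

definition scaled_excess :: "nat \<Rightarrow> 'a \<Rightarrow> real" where
  "scaled_excess n \<omega> = 4 * real n powr (1 / \<delta>) * (snd (ZR (\<lambda>k. Xs k \<omega>) n) - 1/2)"

lemma Xs_meas[measurable]: "Xs i \<in> borel_measurable M"
  using indep unfolding indep_vars_def by auto

lemma ZR_meas:
  "(\<lambda>\<omega>. fst (ZR (\<lambda>k. Xs k \<omega>) n)) \<in> borel_measurable M \<and>
   (\<lambda>\<omega>. snd (ZR (\<lambda>k. Xs k \<omega>) n)) \<in> borel_measurable M"
proof (induction n)
  case 0 then show ?case by simp
next
  case (Suc n)
  then have [measurable]: "(\<lambda>\<omega>. fst (ZR (\<lambda>k. Xs k \<omega>) n)) \<in> borel_measurable M"
      "(\<lambda>\<omega>. snd (ZR (\<lambda>k. Xs k \<omega>) n)) \<in> borel_measurable M" by auto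
  show ?case unfolding ZR.simps(2) Let_def by measurable
qed

lemma half_length_meas[measurable]: "(\<lambda>\<omega>. snd (ZR (\<lambda>k. Xs k \<omega>) n)) \<in> borel_measurable M"
  using ZR_meas by auto

lemma scaled_excess_meas[measurable]: "scaled_excess n \<in> borel_measurable M"
  unfolding scaled_excess_def by measurable

lemma paths_in_unit: "AE \<omega> in M. \<forall>k. Xs k \<omega> \<in> {0..1}"
proof -
  have "AE \<omega> in M. Xs i \<omega> \<in> {0..1}" for i
  proof -
    have "AE x in distr M borel X. x \<in> {0..1}"
      using X_unit by (subst AE_distr_iff) auto
    then have "AE x in distr M borel (Xs i). x \<in> {0..1}" unfolding distr_eq .
    then show ?thesis by (subst (asm) AE_distr_iff) auto
  qed
  then show ?thesis by (simp add: AE_all_countable)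
qed

lemma scaled_excess_nonneg: "AE \<omega> in M. 0 \<le> scaled_excess n \<omega>"
  using paths_in_unit
  by eventually_elim (use half_length_path in \<open>auto simp: scaled_excess_def\<close>)

lemma scaled_excess_gt_iff:
  assumes "n \<ge> 1"
  shows "y < scaled_excess n \<omega> \<longleftrightarrow> y / real n powr (1 / \<delta>) < 4 * (snd (ZR (\<lambda>k. Xs k \<omega>) n) - 1/2)"
proof -
  have N: "real n powr (1 / \<delta>) > 0" using assms by simp
  show ?thesis
    unfolding scaled_excess_def pos_divide_less_eq[OF N] by (simp add: algebra_simps)
qed

lemma edge_dist_tail:
  assumes "c \<in> {0..1}"
  shows "prob {\<omega> \<in> space M. c < edge_dist (Xs i \<omega>)} = 1 - c powr \<delta>"
proof -
  have B: "{t. c < edge_dist t} \<in> sets borel" by measurable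
  have "prob {\<omega> \<in> space M. c < edge_dist (Xs i \<omega>)} = measure (distr M borel (Xs i)) {t. c < edge_dist t}"
    using B by (simp add: measure_distr vimage_def Int_def conj_commute)
  also have "\<dots> = measure (distr M borel X) {t. c < edge_dist t}"
    by (simp add: distr_eq)
  also have "\<dots> = prob {\<omega> \<in> space M. X \<omega> \<in> {t. c < edge_dist t}}"
    using B by (simp add: measure_distr vimage_def Int_def conj_commute)
  also have "{\<omega> \<in> space M. X \<omega> \<in> {t. c < edge_dist t}}
      = space M - {\<omega> \<in> space M. 2 * min (X \<omega>) (1 - X \<omega>) \<le> c}"
    by (auto simp: edge_dist_def)
  also have "prob \<dots> = 1 - prob {\<omega> \<in> space M. 2 * min (X \<omega>) (1 - X \<omega>) \<le> c}"
    by (rule prob_compl) measurable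
  also have "\<dots> = 1 - c powr \<delta>" using cdf[OF assms] by simp
  finally show ?thesis .
qed

lemma all_edge_dist_exceed:
  assumes "finite I" "c \<in> {0..1}"
  shows "prob {\<omega> \<in> space M. \<forall>k\<in>I. c < edge_dist (Xs k \<omega>)} = (1 - c powr \<delta>) ^ card I"
proof (cases "I = {}")
  case True then show ?thesis by (simp add: prob_space)
next
  case False
  define A where "A = {t. c < edge_dist t}"
  have A: "A \<in> sets borel" unfolding A_def by measurable
  have "prob (\<Inter>i\<in>I. Xs i -` A \<inter> space M) = (\<Prod>i\<in>I. prob (Xs i -` A \<inter> space M))"
    using A assms False by (intro indep_varsD[OF indep]) auto
  moreover have "(\<Inter>i\<in>I. Xs i -` A \<inter> space M) = {\<omega> \<in> space M. \<forall>k\<in>I. c < edge_dist (Xs k \<omega>)}"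
    using False by (auto simp: A_def)
  moreover have "prob (Xs i -` A \<inter> space M) = 1 - c powr \<delta>" for i
    using edge_dist_tail[OF assms(2), of i] by (simp add: A_def Int_def vimage_def conj_commute)
  ultimately show ?thesis by simp
qed

section \<open>Bounds on the tail of the rescaled excess\<close>

text \<open>Lower bound: {T_n > x} contains the event that all n folded positions exceed x / n^(1/\<delta>).\<close>
lemma tail_lower_bound:
  assumes x: "x > 0" and n: "n \<ge> 1" and xn: "x powr \<delta> \<le> n"
  shows "(1 - x powr \<delta> / n) ^ n \<le> prob {\<omega> \<in> space M. x < scaled_excess n \<omega>}"
proof -
  define c where "c = x / real n powr (1 / \<delta>)"
  have c0: "0 \<le> c" using x by (simp add: c_def)
  have cd: "c powr \<delta> = x powr \<delta> / n"
    unfolding c_def using n x \<delta>_pos by (intro scaled_level_powr) auto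
  have c1: "c \<le> 1"
    using xn n cd by (intro le_one_of_powr_le_one[OF \<delta>_pos c0]) simp
  have "(1 - x powr \<delta> / n) ^ n = prob {\<omega> \<in> space M. \<forall>k\<in>{..<n}. c < edge_dist (Xs k \<omega>)}"
    using c0 c1 by (simp add: all_edge_dist_exceed cd)
  also have "\<dots> \<le> prob {\<omega> \<in> space M. x < scaled_excess n \<omega>}"
  proof (rule finite_measure_mono_AE)
    show "AE \<omega> in M. \<omega> \<in> {\<omega> \<in> space M. \<forall>k\<in>{..<n}. c < edge_dist (Xs k \<omega>)}
        \<longrightarrow> \<omega> \<in> {\<omega> \<in> space M. x < scaled_excess n \<omega>}"
      using paths_in_unit
    proof eventually_elim
      case (elim \<omega>)
      have "c < 2" using c1 by simp
      then show ?case using excess_lower[OF elim, of c n] n by (auto simp: scaled_excess_gt_iff c_def)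
    qed
  qed measurable
  finally show ?thesis .
qed

text \<open>Upper bound: by the dichotomy lemma, {T_n > x} is contained in the union of the event
  that the first k0 folded positions exceed 2 \<epsilon> and the event that the remaining n - k0
  exceed x / ((1 + 2 \<epsilon>) n^(1/\<delta>)).\<close>
lemma tail_upper_bound:
  assumes x: "x > 0" and \<epsilon>: "\<epsilon> > 0" "2 * \<epsilon> \<le> 1" and k0: "k0 \<le> n" and n: "n \<ge> 1"
    and xn: "(x / (1 + 2 * \<epsilon>)) powr \<delta> \<le> n"
  shows "prob {\<omega> \<in> space M. x < scaled_excess n \<omega>}
     \<le> (1 - (2 * \<epsilon>) powr \<delta>) ^ k0 + (1 - (x / (1 + 2 * \<epsilon>)) powr \<delta> / n) ^ (n - k0)"
proof -
  define c where "c = x / (1 + 2 * \<epsilon>) / real n powr (1 / \<delta>)"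
  have c0: "0 \<le> c" using x \<epsilon> by (simp add: c_def)
  have cd: "c powr \<delta> = (x / (1 + 2 * \<epsilon>)) powr \<delta> / n"
    unfolding c_def using n x \<epsilon> \<delta>_pos by (intro scaled_level_powr) auto
  have c1: "c \<le> 1"
    using xn n cd by (intro le_one_of_powr_le_one[OF \<delta>_pos c0]) simp
  define A where "A = {\<omega> \<in> space M. \<forall>k\<in>{..<k0}. 2 * \<epsilon> < edge_dist (Xs k \<omega>)}"
  define B where "B = {\<omega> \<in> space M. \<forall>k\<in>{k0..<n}. c < edge_dist (Xs k \<omega>)}"
  have [measurable]: "A \<in> sets M" "B \<in> sets M" unfolding A_def B_def by measurable
  have "prob {\<omega> \<in> space M. x < scaled_excess n \<omega>} \<le> prob (A \<union> B)"
  proof (rule finite_measure_mono_AE)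
    show "AE \<omega> in M. \<omega> \<in> {\<omega> \<in> space M. x < scaled_excess n \<omega>} \<longrightarrow> \<omega> \<in> A \<union> B"
      using paths_in_unit
    proof eventually_elim
      case (elim \<omega>)
      have "c * (1 + 2 * \<epsilon>) = x / real n powr (1 / \<delta>)" using \<epsilon> by (simp add: c_def)
      then show ?case
        using excess_dichotomy[OF elim k0 \<epsilon>(1), of c] n
        by (auto simp: A_def B_def scaled_excess_gt_iff)
    qed
  qed measurable
  also have "\<dots> \<le> prob A + prob B" by (rule measure_subadditive) auto
  also have "prob A = (1 - (2 * \<epsilon>) powr \<delta>) ^ k0"
    unfolding A_def using \<epsilon> by (subst all_edge_dist_exceed) auto
  also have "prob B = (1 - (x / (1 + 2 * \<epsilon>)) powr \<delta> / n) ^ (n - k0)"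
    unfolding B_def using c0 c1 by (subst all_edge_dist_exceed) (auto simp: cd)
  finally show ?thesis .
qed

text \<open>A bound uniform in n, dominating the tails for the moment convergence:
  {T_n > y} forces every folded position above y / (2 n^(1/\<delta>)).\<close>
lemma tail_uniform_bound:
  assumes y: "y > 0" and n: "n \<ge> 1"
  shows "prob {\<omega> \<in> space M. y < scaled_excess n \<omega>} \<le> exp (- ((y / 2) powr \<delta>))"
proof -
  define c where "c = y / 2 / real n powr (1 / \<delta>)"
  have c0: "0 \<le> c" using y by (simp add: c_def)
  have cd: "c powr \<delta> = (y / 2) powr \<delta> / n"
    unfolding c_def using n y \<delta>_pos by (intro scaled_level_powr) auto
  define B where "B = {\<omega> \<in> space M. \<forall>k\<in>{..<n}. c < edge_dist (Xs k \<omega>)}"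
  have [measurable]: "B \<in> sets M" unfolding B_def by measurable
  have "prob {\<omega> \<in> space M. y < scaled_excess n \<omega>} \<le> prob B"
  proof (rule finite_measure_mono_AE)
    show "AE \<omega> in M. \<omega> \<in> {\<omega> \<in> space M. y < scaled_excess n \<omega>} \<longrightarrow> \<omega> \<in> B"
      using paths_in_unit
    proof eventually_elim
      case (elim \<omega>)
      have "2 * c = y / real n powr (1 / \<delta>)" by (simp add: c_def)
      then show ?case
        using excess_upper0[OF elim] n by (fastforce simp: B_def scaled_excess_gt_iff)
    qed
  qed measurable
  also have "\<dots> \<le> exp (- ((y / 2) powr \<delta>))"
  proof (cases "c \<le> 1")
    case True
    have "prob B = (1 - (y / 2) powr \<delta> / n) ^ n"
      unfolding B_def using c0 True by (subst all_edge_dist_exceed) (auto simp: cd)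
    also have "\<dots> \<le> exp (- ((y / 2) powr \<delta>))"
    proof (rule one_minus_pow_le_exp)
      have "c powr \<delta> \<le> 1" using c0 True \<delta>_pos by (intro powr_le1) auto
      then show "(y / 2) powr \<delta> \<le> real n" using cd n by (simp add: field_simps)
    qed (use n in auto)
    finally show ?thesis .
  next
    case False
    text \<open>A level above 1 cannot be exceeded by v(X_1), which lies in [0,1] almost surely.\<close>
    have "B \<subseteq> {\<omega> \<in> space M. 1 < edge_dist (Xs 0 \<omega>)}"
    proof
      fix \<omega> assume "\<omega> \<in> B"
      then have "\<omega> \<in> space M" "c < edge_dist (Xs 0 \<omega>)" using n by (auto simp: B_def)
      then show "\<omega> \<in> {\<omega> \<in> space M. 1 < edge_dist (Xs 0 \<omega>)}" using False by auto
    qed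
    then have "prob B \<le> prob {\<omega> \<in> space M. 1 < edge_dist (Xs 0 \<omega>)}"
      by (intro finite_measure_mono) measurable
    also have "\<dots> = 0" using edge_dist_tail[of 1 0] by simp
    finally show ?thesis by (smt (verit) exp_gt_zero)
  qed
  finally show ?thesis .
qed

section \<open>Convergence in distribution\<close>

lemma tail_eventually_above:
  assumes x: "x > 0" and a: "a < exp (- (x powr \<delta>))"
  shows "eventually (\<lambda>n. a < prob {\<omega> \<in> space M. x < scaled_excess n \<omega>}) sequentially"
proof -
  have "eventually (\<lambda>n. a < (1 - x powr \<delta> / n) ^ n) sequentially"
    using tendsto_exp_limit_sequentially[of "- (x powr \<delta>)"] a by (intro order_tendstoD(1)) auto
  moreover have "eventually (\<lambda>n. n \<ge> max 1 (nat \<lceil>x powr \<delta>\<rceil>)) sequentially"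
    by (rule eventually_ge_at_top)
  ultimately show ?thesis
  proof eventually_elim
    case (elim n)
    then have "(1 - x powr \<delta> / n) ^ n \<le> prob {\<omega> \<in> space M. x < scaled_excess n \<omega>}"
      using x by (intro tail_lower_bound) auto
    then show ?case using elim by simp
  qed
qed

text \<open>Limsup half: the upper bound tends to (1 - (2\<epsilon>)^\<delta>)^k0 + exp(-(x/(1+2\<epsilon>))^\<delta>),
  which is below a for the parameters chosen above.\<close>
lemma tail_eventually_below:
  assumes x: "x > 0" and a: "exp (- (x powr \<delta>)) < a"
  shows "eventually (\<lambda>n. prob {\<omega> \<in> space M. x < scaled_excess n \<omega>} < a) sequentially"
proof -
  obtain \<epsilon> :: real and k0 :: nat where \<epsilon>: "0 < \<epsilon>" "2 * \<epsilon> \<le> 1"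
    and lim_below: "(1 - (2 * \<epsilon>) powr \<delta>) ^ k0 + exp (- ((x / (1 + 2 * \<epsilon>)) powr \<delta>)) < a"
    using upper_bound_parameters[OF x \<delta>_pos a] by blast
  define b where "b = (x / (1 + 2 * \<epsilon>)) powr \<delta>"
  have "(\<lambda>n. (1 - (2 * \<epsilon>) powr \<delta>) ^ k0 + (1 - b / real n) ^ (n - k0))
      \<longlonglongrightarrow> (1 - (2 * \<epsilon>) powr \<delta>) ^ k0 + exp (- b)"
    by (intro tendsto_add tendsto_const one_minus_pow_shift_limit)
  then have "eventually (\<lambda>n. (1 - (2 * \<epsilon>) powr \<delta>) ^ k0 + (1 - b / real n) ^ (n - k0) < a) sequentially"
    using lim_below by (intro order_tendstoD(2)) (auto simp: b_def)
  moreover have "eventually (\<lambda>n. n \<ge> max (max 1 k0) (nat \<lceil>b\<rceil>)) sequentially"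
    by (rule eventually_ge_at_top)
  ultimately show ?thesis
  proof eventually_elim
    case (elim n)
    then have "b \<le> real n" by linarith
    then have "prob {\<omega> \<in> space M. x < scaled_excess n \<omega>}
        \<le> (1 - (2 * \<epsilon>) powr \<delta>) ^ k0 + (1 - b / real n) ^ (n - k0)"
      using tail_upper_bound[of x \<epsilon> k0 n] x \<epsilon> elim by (simp add: b_def)
    then show ?case using elim by simp
  qed
qed

theorem tail_limit:
  assumes "x > 0"
  shows "(\<lambda>n. prob {\<omega> \<in> space M. x < scaled_excess n \<omega>}) \<longlonglongrightarrow> exp (- (x powr \<delta>))"
  using tail_eventually_above[OF assms] tail_eventually_below[OF assms] by (rule order_tendstoI)

section \<open>Convergence of the moments\<close>

definition moment_integrand :: "real \<Rightarrow> nat \<Rightarrow> real \<Rightarrow> real" where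
  "moment_integrand \<alpha> n y = power_weight \<alpha> y * prob {\<omega> \<in> space M. y < scaled_excess n \<omega>}"

lemma tail_prob_measurable: "(\<lambda>y. prob {\<omega> \<in> space M. y < scaled_excess n \<omega>}) \<in> borel_measurable borel"
proof -
  text \<open>The tail function is antitone, hence Borel.\<close>
  have "mono (\<lambda>y. - prob {\<omega> \<in> space M. y < scaled_excess n \<omega>})"
    by (intro monoI le_imp_neg_le finite_measure_mono) (auto, measurable)
  then have "(\<lambda>y. - (- prob {\<omega> \<in> space M. y < scaled_excess n \<omega>})) \<in> borel_measurable borel"
    by (intro borel_measurable_uminus borel_measurable_mono)
  then show ?thesis by simp
qed

lemma moment_integrand_measurable[measurable]: "moment_integrand \<alpha> n \<in> borel_measurable lborel"
  unfolding moment_integrand_def using tail_prob_measurable[of n] by simp measurable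

lemma moment_integrand_nonneg: "\<alpha> > 0 \<Longrightarrow> 0 \<le> moment_integrand \<alpha> n y"
  by (simp add: moment_integrand_def power_weight_nonneg)

lemma moment_integrand_bound:
  assumes "\<alpha> > 0"
  shows "moment_integrand \<alpha> n y \<le> power_weight \<alpha> y * exp (- ((y / 2) powr \<delta>))"
proof (cases "y > 0 \<and> n \<ge> 1")
  case True
  then show ?thesis unfolding moment_integrand_def
    using tail_uniform_bound power_weight_nonneg[OF assms] by (intro mult_left_mono) auto
next
  case False
  then consider "y \<le> 0" | "n = 0" by linarith
  then show ?thesis
  proof cases
    case 1
    then show ?thesis by (simp add: moment_integrand_def power_weight_def)
  next
    case 2
    then have "prob {\<omega> \<in> space M. y < scaled_excess n \<omega>} = 0" if "y > 0"
      using that by (simp add: scaled_excess_def)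
    then show ?thesis using power_weight_nonneg[OF assms, of y]
      by (cases "y > 0") (simp_all add: moment_integrand_def power_weight_def)
  qed
qed

lemma moment_integrand_limit:
  "(\<lambda>n. moment_integrand \<alpha> n y) \<longlonglongrightarrow> power_weight \<alpha> y * exp (- (y powr \<delta>))"
proof (cases "y > 0")
  case True
  then show ?thesis unfolding moment_integrand_def by (intro tendsto_mult tendsto_const tail_limit)
qed (simp add: moment_integrand_def power_weight_def)

lemma moment_integral_limit:
  assumes \<alpha>: "\<alpha> > 0"
  shows "(\<lambda>n. integral\<^sup>L lborel (moment_integrand \<alpha> n)) \<longlonglongrightarrow> Gamma (\<alpha> / \<delta> + 1)"
proof -
  have W1: "has_bochner_integral lborel (\<lambda>y. power_weight \<alpha> y * exp (- ((y / 1) powr \<delta>)))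
      (1 powr \<alpha> * Gamma (\<alpha> / \<delta> + 1))"
    using \<alpha> \<delta>_pos by (intro weibull_moment_integral) auto
  have W2: "has_bochner_integral lborel (\<lambda>y. power_weight \<alpha> y * exp (- ((y / 2) powr \<delta>)))
      (2 powr \<alpha> * Gamma (\<alpha> / \<delta> + 1))"
    using \<alpha> \<delta>_pos by (intro weibull_moment_integral) auto
  have "(\<lambda>n. integral\<^sup>L lborel (moment_integrand \<alpha> n))
      \<longlonglongrightarrow> integral\<^sup>L lborel (\<lambda>y. power_weight \<alpha> y * exp (- (y powr \<delta>)))"
  proof (rule integral_dominated_convergence[where w="\<lambda>y. power_weight \<alpha> y * exp (- ((y / 2) powr \<delta>))"])
    show "integrable lborel (\<lambda>y. power_weight \<alpha> y * exp (- ((y / 2) powr \<delta>)))"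
      using W2 by (auto simp: integrable.simps)
    show "AE y in lborel. (\<lambda>n. moment_integrand \<alpha> n y) \<longlonglongrightarrow> power_weight \<alpha> y * exp (- (y powr \<delta>))"
      using moment_integrand_limit by simp
    show "AE y in lborel. norm (moment_integrand \<alpha> n y) \<le> power_weight \<alpha> y * exp (- ((y / 2) powr \<delta>))"
      for n using moment_integrand_bound[OF \<alpha>] moment_integrand_nonneg[OF \<alpha>] by simp
  qed simp_all
  also have "integral\<^sup>L lborel (\<lambda>y. power_weight \<alpha> y * exp (- (y powr \<delta>))) = Gamma (\<alpha> / \<delta> + 1)"
    using has_bochner_integral_integral_eq[OF W1] by simp
  finally show ?thesis .
qed

text \<open>Pathwise, the expression in the theorem is T_n^\<alpha>, since r_n - 1/2 \<ge> 0.\<close>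
lemma scaled_excess_powr:
  assumes \<alpha>: "\<alpha> > 0"
  shows "AE \<omega> in M. 4 powr \<alpha> * real n powr (\<alpha> / \<delta>) * (snd (ZR (\<lambda>k. Xs k \<omega>) n) - 1/2) powr \<alpha>
      = scaled_excess n \<omega> powr \<alpha>"
  using paths_in_unit
proof eventually_elim
  case (elim \<omega>)
  have s: "0 \<le> snd (ZR (\<lambda>k. Xs k \<omega>) n) - 1/2" using half_length_path[OF elim, of n] by simp
  have "real n powr (\<alpha> / \<delta>) = (real n powr (1 / \<delta>)) powr \<alpha>" by (simp add: powr_powr)
  then show ?case using s by (simp add: scaled_excess_def powr_mult)
qed

lemma moment_eq_tail_integral:
  assumes \<alpha>: "\<alpha> > 0"
  shows "integral\<^sup>L M (\<lambda>\<omega>. 4 powr \<alpha> * real n powr (\<alpha> / \<delta>) * (snd (ZR (\<lambda>k. Xs k \<omega>) n) - 1/2) powr \<alpha>)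
       = integral\<^sup>L lborel (moment_integrand \<alpha> n)"
proof -
  have "integral\<^sup>L M (\<lambda>\<omega>. 4 powr \<alpha> * real n powr (\<alpha> / \<delta>) * (snd (ZR (\<lambda>k. Xs k \<omega>) n) - 1/2) powr \<alpha>)
      = integral\<^sup>L M (\<lambda>\<omega>. scaled_excess n \<omega> powr \<alpha>)"
    using scaled_excess_powr[OF \<alpha>] by (intro integral_cong_AE) auto
  also have "\<dots> = enn2real (\<integral>\<^sup>+ \<omega>. ennreal (scaled_excess n \<omega> powr \<alpha>) \<partial>M)"
    by (rule integral_eq_nn_integral) auto
  also have "(\<integral>\<^sup>+ \<omega>. ennreal (scaled_excess n \<omega> powr \<alpha>) \<partial>M)
      = (\<integral>\<^sup>+ y. ennreal (power_weight \<alpha> y) * emeasure M {\<omega> \<in> space M. y < scaled_excess n \<omega>} \<partial>lborel)"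
    by (rule layer_cake[OF sigma_finite_measure_axioms \<alpha> scaled_excess_meas scaled_excess_nonneg])
  also have "\<dots> = (\<integral>\<^sup>+ y. ennreal (moment_integrand \<alpha> n y) \<partial>lborel)"
    using \<alpha> by (intro nn_integral_cong)
      (simp add: moment_integrand_def emeasure_eq_measure ennreal_mult power_weight_nonneg)
  also have "enn2real \<dots> = integral\<^sup>L lborel (moment_integrand \<alpha> n)"
    by (rule integral_eq_nn_integral[symmetric]) (auto simp: moment_integrand_nonneg[OF \<alpha>])
  finally show ?thesis .
qed

theorem moment_limit:
  assumes \<alpha>: "\<alpha> > 0"
  shows "(\<lambda>n. integral\<^sup>L M (\<lambda>\<omega>. 4 powr \<alpha> * real n powr (\<alpha> / \<delta>) * (snd (ZR (\<lambda>k. Xs k \<omega>) n) - 1/2) powr \<alpha>))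
      \<longlonglongrightarrow> \<alpha> / \<delta> * Gamma (\<alpha> / \<delta>)"
proof -
  have "\<alpha> / \<delta> > 0" using \<alpha> \<delta>_pos by simp
  then have "Gamma (\<alpha> / \<delta> + 1) = \<alpha> / \<delta> * Gamma (\<alpha> / \<delta>)"
    by (intro Gamma_plus1) (auto dest: nonpos_Ints_nonpos)
  then show ?thesis
    using moment_integral_limit[OF \<alpha>] unfolding moment_eq_tail_integral[OF \<alpha>] by simp
qed

end

theorem theorem1:
  fixes M :: "'a measure" and X :: "'a \<Rightarrow> real" and Xs :: "nat \<Rightarrow> 'a \<Rightarrow> real"
    and \<delta> :: real
  assumes "prob_space M"
    and "X \<in> borel_measurable M"
    and "prob_space.indep_vars M (\<lambda>_. borel) Xs UNIV"
    and "\<And>i. distr M borel (Xs i) = distr M borel X"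
    and "AE \<omega> in M. X \<omega> \<in> {0..1}"
    and "\<delta> > 0"
    and "\<And>x. x \<in> {0..1} \<Longrightarrow>
           measure M {\<omega> \<in> space M. 2 * min (X \<omega>) (1 - X \<omega>) \<le> x} = x powr \<delta>"
  shows "(\<forall>x>0. (\<lambda>n. measure M {\<omega> \<in> space M.
              4 * real n powr (1 / \<delta>) * (snd (ZR (\<lambda>k. Xs k \<omega>) n) - 1/2) > x})
            \<longlonglongrightarrow> exp (- (x powr \<delta>)))
      \<and> (\<forall>\<alpha>>0. (\<lambda>n. integral\<^sup>L M (\<lambda>\<omega>. 4 powr \<alpha> * real n powr (\<alpha> / \<delta>)
                 * (snd (ZR (\<lambda>k. Xs k \<omega>) n) - 1/2) powr \<alpha>))
            \<longlonglongrightarrow> \<alpha> / \<delta> * Gamma (\<alpha> / \<delta>))"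
proof -
  interpret shrinking_interval M X Xs \<delta>
    using assms by (simp add: shrinking_interval_def shrinking_interval_axioms_def)
  show ?thesis
    using tail_limit moment_limit by (simp add: scaled_excess_def)
qed

end
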